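(* For every integer $n\geq 5$ and every $p>1$, $$\lambda_{1,p}(T_{n,4})>\lambda_{1,p}(T_{n,3}).$$
   Context: For $n>i\ge 3$, the tadpole graph $T_{n,i}$ is the graph on vertices $t_1,\dots,t_n$ with edges $t_n\sim t_{n-1}\sim\cdots\sim t_i\sim t_{i-1}\sim\cdots\sim t_2\sim t_1\sim t_i$ (a cycle of length $i$ with a path attached at $t_i$). For a finite connected graph $G$, $B(G)=\{x\in V(G):\deg x=1\}$, $C_B(G)=\{f\in\mathbb{R}^{V(G)}: f|_{B(G)}\equiv0\}$, and $$\lambda_{1,p}(G)=\min_{f\in C_B(G)\setminus\{0\}}\frac{\sum_{\{x,y\}\in E(G)}|f(x)-f(y)|^p}{\sum_{x\in V(G)}|f(x)|^p}.$$ *)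

theory Defs
  imports Complex_Main
begin

definition degree :: "'a set set \<Rightarrow> 'a \<Rightarrow> nat" where
  "degree E x = card {e \<in> E. x \<in> e}"

definition boundary :: "'a set \<Rightarrow> 'a set set \<Rightarrow> 'a set" where
  "boundary V E = {x \<in> V. degree E x = 1}"

definition CB :: "'a set \<Rightarrow> 'a set set \<Rightarrow> ('a \<Rightarrow> real) set" where
  "CB V E = {f. \<forall>x \<in> boundary V E. f x = 0}"

definition rayleigh :: "'a set \<Rightarrow> 'a set set \<Rightarrow> real \<Rightarrow> ('a \<Rightarrow> real) \<Rightarrow> real" where
  "rayleigh V E p f =
     (\<Sum>e\<in>E. (\<Sum>x\<in>e. \<Sum>y\<in>e. if x \<noteq> y then \<bar>f x - f y\<bar> powr p else 0) / 2)
     / (\<Sum>x\<in>V. \<bar>f x\<bar> powr p)"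

text \<open>For an edge e = {x,y} the inner double sum counts |f x - f y|^p twice, hence the division by 2.\<close>

definition lambda1p :: "'a set \<Rightarrow> 'a set set \<Rightarrow> real \<Rightarrow> real" where
  "lambda1p V E p = Inf {rayleigh V E p f | f. f \<in> CB V E \<and> (\<exists>x\<in>V. f x \<noteq> 0)}"

text \<open>Tadpole graph T_{n,i}: vertices t_1..t_n (as 1..n), path n-(n-1)-...-1 plus edge 1-i.\<close>
definition tadpole_V :: "nat \<Rightarrow> nat set" where
  "tadpole_V n = {1..n}"

definition tadpole_E :: "nat \<Rightarrow> nat \<Rightarrow> nat set set" where
  "tadpole_E n i = {{k, k + 1} | k. 1 \<le> k \<and> k < n} \<union> {{1, i}}"

end

theory Submission
  imports Defs "HOL-Analysis.Function_Topology" "HOL-Analysis.Convex" "HOL-Combinatorics.Transposition"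
begin

text \<open>
  By compactness the Rayleigh quotient of T_{n,4} attains its minimum at a ground state v,
  which may be taken nonnegative. Swapping t_1 and t_3 is an automorphism of T_{n,4}, and by
  Minkowski's inequality the two-point p-power mean of v and of its mirror image is again a
  ground state; so we may assume v(t_1) = v(t_3). Trading the edge t_1t_4 for t_1t_3 then lowers
  the energy of v by |v(t_1) - v(t_4)|^p, so the claim holds unless v(t_1) = v(t_3) = v(t_4).
  That case is impossible: a small change of v at t_2, at t_1, or just before the first nonzero
  value on the path would push the Rayleigh quotient below its minimum. Here p > 1 enters:
  moving a value by e changes the energy of an edge that was flat only by e^p = o(e).
\<close>

section \<open>Tadpole graphs\<close>

definition tadpole_energy :: "nat \<Rightarrow> nat \<Rightarrow> real \<Rightarrow> (nat \<Rightarrow> real) \<Rightarrow> real" where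
  "tadpole_energy n i p f = (\<Sum>k=1..<n. \<bar>f k - f (Suc k)\<bar> powr p) + \<bar>f 1 - f i\<bar> powr p"

definition lp_mass :: "nat \<Rightarrow> real \<Rightarrow> (nat \<Rightarrow> real) \<Rightarrow> real" where
  "lp_mass n p f = (\<Sum>x=1..n. \<bar>f x\<bar> powr p)"

lemma tadpole_E_eq: "tadpole_E n i = (\<lambda>k. {k, Suc k}) ` {1..<n} \<union> {{1, i}}"
  unfolding tadpole_E_def by auto

lemma finite_tadpole_E: "finite (tadpole_E n i)"
  unfolding tadpole_E_eq by simp

lemma sum_tadpole_E:
  assumes "3 \<le> i"
  shows "(\<Sum>e\<in>tadpole_E n i. g e) = (\<Sum>k=1..<n. g {k, Suc k}) + g {1, i}"
proof -
  have "inj_on (\<lambda>k. {k, Suc k}) {1..<n}"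
    by (rule inj_onI) (auto simp: doubleton_eq_iff)
  moreover have "{1, i} \<notin> (\<lambda>k. {k, Suc k}) ` {1..<n}"
  proof
    assume "{1, i} \<in> (\<lambda>k. {k, Suc k}) ` {1..<n}"
    then obtain k where "1 \<le> k" "{1, i} = {k, Suc k}"
      by auto
    with assms show False
      by (simp add: doubleton_eq_iff)
  qed
  ultimately show ?thesis
    unfolding tadpole_E_eq by (subst sum.union_disjoint) (auto simp: sum.reindex)
qed

lemma rayleigh_tadpole:
  assumes "3 \<le> i"
  shows "rayleigh (tadpole_V n) (tadpole_E n i) p f = tadpole_energy n i p f / lp_mass n p f"
proof -
  have edge: "(\<bar>a - b\<bar> powr p + \<bar>b - a\<bar> powr p) / 2 = \<bar>a - b\<bar> powr p" for a b :: real
    by (simp add: abs_minus_commute)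
  show ?thesis
    using assms unfolding rayleigh_def sum_tadpole_E[OF assms] tadpole_energy_def lp_mass_def tadpole_V_def
    by (simp add: edge)
qed

lemma two_le_degree:
  assumes "finite E" "e \<in> E" "e' \<in> E" "e \<noteq> e'" "x \<in> e" "x \<in> e'"
  shows "2 \<le> degree E x"
proof -
  have "card {e, e'} \<le> card {d \<in> E. x \<in> d}"
    using assms by (intro card_mono) auto
  then show ?thesis
    using assms(4) unfolding degree_def by simp
qed

lemma path_edge_in_tadpole_E: "1 \<le> k \<Longrightarrow> k < n \<Longrightarrow> {k, Suc k} \<in> tadpole_E n i"
  unfolding tadpole_E_def by auto

lemma boundary_tadpole:
  assumes "3 \<le> i" "i < n"
  shows "boundary (tadpole_V n) (tadpole_E n i) = {n}"
proof -
  have "{e \<in> tadpole_E n i. n \<in> e} = {{n - 1, n}}"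
    using assms unfolding tadpole_E_eq by (auto simp: image_iff intro!: bexI[of _ "n - 1"])
  then have "degree (tadpole_E n i) n = 1"
    unfolding degree_def by simp
  moreover have "2 \<le> degree (tadpole_E n i) x" if "1 \<le> x" "x < n" for x
  proof (cases "x = 1")
    case True
    have "{1, Suc 1} \<in> tadpole_E n i" "{1, i} \<in> tadpole_E n i" "{1, Suc 1} \<noteq> {1, i}"
      using assms path_edge_in_tadpole_E[of 1 n i] by (auto simp: tadpole_E_def doubleton_eq_iff)
    with True show ?thesis
      using two_le_degree[OF finite_tadpole_E] by blast
  next
    case False
    have "{x - 1, x} \<in> tadpole_E n i"
      using path_edge_in_tadpole_E[of "x - 1" n i] False that by simp
    moreover have "{x, Suc x} \<in> tadpole_E n i" "{x - 1, x} \<noteq> {x, Suc x}"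
      using that path_edge_in_tadpole_E by (auto simp: doubleton_eq_iff)
    ultimately show ?thesis
      using two_le_degree[OF finite_tadpole_E] by blast
  qed
  ultimately show ?thesis
    using assms unfolding boundary_def tadpole_V_def by fastforce
qed

lemma CB_tadpole: "3 \<le> i \<Longrightarrow> i < n \<Longrightarrow> CB (tadpole_V n) (tadpole_E n i) = {f. f n = 0}"
  unfolding CB_def by (simp add: boundary_tadpole)

lemma lp_mass_nonneg: "0 \<le> lp_mass n p f"
  unfolding lp_mass_def by (intro sum_nonneg) simp

lemma lp_mass_pos: "x \<in> {1..n} \<Longrightarrow> f x \<noteq> 0 \<Longrightarrow> 0 < lp_mass n p f"
  unfolding lp_mass_def by (rule sum_pos2[of _ x]) auto

lemma tadpole_energy_nonneg: "0 \<le> tadpole_energy n i p f"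
  unfolding tadpole_energy_def by (intro add_nonneg_nonneg sum_nonneg) simp_all

lemma lambda1p_tadpole:
  assumes "3 \<le> i" "i < n"
  shows "lambda1p (tadpole_V n) (tadpole_E n i) p
    = Inf {tadpole_energy n i p f / lp_mass n p f | f. f n = 0 \<and> (\<exists>x\<in>{1..n}. f x \<noteq> 0)}"
  unfolding lambda1p_def CB_tadpole[OF assms] rayleigh_tadpole[OF assms(1)]
  unfolding tadpole_V_def by simp

lemma lambda1p_tadpole_le:
  assumes "3 \<le> i" "i < n" "f n = 0" "x \<in> {1..n}" "f x \<noteq> 0"
  shows "lambda1p (tadpole_V n) (tadpole_E n i) p \<le> tadpole_energy n i p f / lp_mass n p f"
  unfolding lambda1p_tadpole[OF assms(1,2)]
proof (rule cInf_lower)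
  show "bdd_below {tadpole_energy n i p f / lp_mass n p f | f. f n = 0 \<and> (\<exists>x\<in>{1..n}. f x \<noteq> 0)}"
    by (intro bdd_belowI[of _ 0]) (auto simp: tadpole_energy_nonneg lp_mass_nonneg)
qed (use assms in blast)

lemma lambda1p_tadpole_ge:
  assumes "3 \<le> i" "i < n"
    and bound: "\<And>h. h n = 0 \<Longrightarrow> \<mu> * lp_mass n p h \<le> tadpole_energy n i p h"
  shows "\<mu> \<le> lambda1p (tadpole_V n) (tadpole_E n i) p"
  unfolding lambda1p_tadpole[OF assms(1,2)]
proof (rule cInf_greatest)
  fix r
  assume "r \<in> {tadpole_energy n i p f / lp_mass n p f | f. f n = 0 \<and> (\<exists>x\<in>{1..n}. f x \<noteq> 0)}"
  then obtain f x where "r = tadpole_energy n i p f / lp_mass n p f" "f n = 0" "x \<in> {1..n}" "f x \<noteq> 0"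
    by blast
  then show "\<mu> \<le> r"
    using bound lp_mass_pos by (simp add: pos_le_divide_eq)
qed (use assms in \<open>auto intro!: exI[of _ "\<lambda>x. if x = 1 then 1 else 0"]\<close>)

section \<open>Two-point power means\<close>

lemma powr_convex_combination_le:
  fixes u v s p :: real
  assumes "0 \<le> u" "0 \<le> v" "0 \<le> s" "s \<le> 1" "1 \<le> p"
  shows "(s * u + (1 - s) * v) powr p \<le> s * u powr p + (1 - s) * v powr p"
proof -
  have scaled: "(t * w) powr p \<le> t * w powr p" if "0 \<le> t" "t \<le> 1" "0 \<le> w" for t w :: real
  proof -
    have "t powr p \<le> t"
      using that assms(5) by (cases "t = 0") (auto intro: powr_le_one_le)
    then show ?thesis
      using that by (simp add: powr_mult mult_right_mono)
  qed
  consider "u = 0" | "v = 0" | "0 < u" "0 < v"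
    using assms by linarith
  then show ?thesis
  proof cases
    case 1
    then show ?thesis using scaled[of "1 - s" v] assms by simp
  next
    case 2
    then show ?thesis using scaled[of s u] assms by simp
  next
    case 3
    then show ?thesis
      using convex_onD[OF powr_convex[OF assms(5)], of "1 - s" u v] assms by (simp add: add.commute)
  qed
qed

definition power_mean :: "real \<Rightarrow> real \<Rightarrow> real \<Rightarrow> real" where
  "power_mean p a b = ((a powr p + b powr p) / 2) powr (1 / p)"

lemma power_mean_nonneg: "0 \<le> power_mean p a b"
  unfolding power_mean_def by simp

lemma power_mean_commute: "power_mean p a b = power_mean p b a"
  unfolding power_mean_def by (simp add: add.commute)

lemma power_mean_same: "0 < p \<Longrightarrow> 0 \<le> a \<Longrightarrow> power_mean p a a = a"
  unfolding power_mean_def by (simp add: powr_powr)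

lemma power_mean_powr: "0 < p \<Longrightarrow> power_mean p a b powr p = (a powr p + b powr p) / 2"
  unfolding power_mean_def by (simp add: powr_powr)

lemma power_mean_mono:
  "0 < p \<Longrightarrow> 0 \<le> a \<Longrightarrow> a \<le> a' \<Longrightarrow> 0 \<le> b \<Longrightarrow> b \<le> b' \<Longrightarrow> power_mean p a b \<le> power_mean p a' b'"
  unfolding power_mean_def by (intro powr_mono2 divide_right_mono add_mono) auto

lemma power_mean_eq_0_iff: "0 < p \<Longrightarrow> power_mean p a b = 0 \<longleftrightarrow> a = 0 \<and> b = 0"
  unfolding power_mean_def by (simp add: add_nonneg_eq_0_iff)

lemma power_mean_scale:
  assumes "0 < p" "0 \<le> t" "0 \<le> a" "0 \<le> b"
  shows "power_mean p (t * a) (t * b) = t * power_mean p a b"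
proof -
  have "((t * a) powr p + (t * b) powr p) / 2 = t powr p * ((a powr p + b powr p) / 2)"
    using assms by (simp add: powr_mult algebra_simps)
  then have "power_mean p (t * a) (t * b) = (t powr p * ((a powr p + b powr p) / 2)) powr (1 / p)"
    unfolding power_mean_def by (rule arg_cong)
  also have "\<dots> = (t powr p) powr (1 / p) * power_mean p a b"
    unfolding power_mean_def by (rule powr_mult; simp)
  also have "(t powr p) powr (1 / p) = t"
    using assms by (simp add: powr_powr)
  finally show ?thesis .
qed

lemma power_mean_le_1: "0 < p \<Longrightarrow> x powr p + y powr p \<le> 2 \<Longrightarrow> power_mean p x y \<le> 1"
  unfolding power_mean_def by (rule powr_le1) auto

lemma power_mean_add_le:
  assumes p: "1 \<le> p" and nonneg: "0 \<le> a" "0 \<le> b" "0 \<le> c" "0 \<le> d"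
  shows "power_mean p (a + c) (b + d) \<le> power_mean p a b + power_mean p c d"
proof -
  have p0: "0 < p" using p by simp
  define A B where "A = power_mean p a b" and "B = power_mean p c d"
  consider "A = 0" | "B = 0" | "0 < A" "0 < B"
    using power_mean_nonneg[of p] unfolding A_def B_def by (metis less_eq_real_def)
  then show ?thesis
  proof cases
    case 1
    then show ?thesis using p0 by (simp add: A_def power_mean_eq_0_iff power_mean_nonneg)
  next
    case 2
    then show ?thesis using p0 by (simp add: B_def power_mean_eq_0_iff power_mean_nonneg)
  next
    case 3
    define s where "s = A / (A + B)"
    have s: "0 \<le> s" "s \<le> 1" "1 - s = B / (A + B)"
      using 3 by (auto simp: s_def field_simps)
    have split: "(x + y) / (A + B) = s * (x / A) + (1 - s) * (y / B)" for x y
      using 3 unfolding s(3) by (simp add: s_def add_divide_distrib)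
    have unit: "(x / M) powr p + (y / M) powr p = 2"
      if "M = power_mean p x y" "0 < M" "0 \<le> x" "0 \<le> y" for x y M
    proof -
      have "(x / M) powr p + (y / M) powr p = (x powr p + y powr p) / M powr p"
        using that by (simp add: powr_divide add_divide_distrib)
      also have "x powr p + y powr p = 2 * M powr p"
        using that(1) power_mean_powr[OF p0, of x y] by simp
      finally show ?thesis
        using \<open>0 < M\<close> by simp
    qed
    have unit_A: "(a / A) powr p + (b / A) powr p = 2"
      using unit A_def 3 nonneg by blast
    have unit_B: "(c / B) powr p + (d / B) powr p = 2"
      using unit B_def 3 nonneg by blast
    have "((a + c) / (A + B)) powr p + ((b + d) / (A + B)) powr p
        \<le> s * ((a / A) powr p + (b / A) powr p) + (1 - s) * ((c / B) powr p + (d / B) powr p)"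
      using powr_convex_combination_le[OF _ _ s(1,2) p, of "a / A" "c / B"]
        powr_convex_combination_le[OF _ _ s(1,2) p, of "b / A" "d / B"] 3 nonneg
      unfolding split by (simp add: algebra_simps)
    also have "\<dots> = 2"
      unfolding unit_A unit_B by simp
    finally have "power_mean p ((a + c) / (A + B)) ((b + d) / (A + B)) \<le> 1"
      by (rule power_mean_le_1[OF p0])
    then have "power_mean p (a + c) (b + d) / (A + B) \<le> 1"
      using power_mean_scale[OF p0, of "1 / (A + B)" "a + c" "b + d"] 3 nonneg by simp
    then show ?thesis
      using 3 by (simp add: A_def B_def)
  qed
qed

lemma power_mean_diff_powr_le:
  assumes p: "1 \<le> p" and nonneg: "0 \<le> a" "0 \<le> b" "0 \<le> c" "0 \<le> d"
  shows "\<bar>power_mean p a b - power_mean p c d\<bar> powr p \<le> (\<bar>a - c\<bar> powr p + \<bar>b - d\<bar> powr p) / 2"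
proof -
  have p0: "0 < p" using p by simp
  have one_side: "power_mean p a b - power_mean p c d \<le> power_mean p \<bar>a - c\<bar> \<bar>b - d\<bar>"
    if "0 \<le> a" "0 \<le> b" "0 \<le> c" "0 \<le> d" for a b c d
  proof -
    have "power_mean p a b \<le> power_mean p (c + \<bar>a - c\<bar>) (d + \<bar>b - d\<bar>)"
      using that p0 by (intro power_mean_mono) auto
    also have "\<dots> \<le> power_mean p c d + power_mean p \<bar>a - c\<bar> \<bar>b - d\<bar>"
      using that p by (intro power_mean_add_le) auto
    finally show ?thesis by simp
  qed
  have "\<bar>power_mean p a b - power_mean p c d\<bar> \<le> power_mean p \<bar>a - c\<bar> \<bar>b - d\<bar>"
    using one_side[OF nonneg] one_side[of c d a b] nonneg by (simp add: abs_le_iff abs_minus_commute)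
  then have "\<bar>power_mean p a b - power_mean p c d\<bar> powr p \<le> power_mean p \<bar>a - c\<bar> \<bar>b - d\<bar> powr p"
    using p0 by (intro powr_mono2) auto
  then show ?thesis
    using power_mean_powr[OF p0] by simp
qed

section \<open>Ground states\<close>

lemma continuous_on_abs_diff_powr:
  "0 < p \<Longrightarrow> continuous_on A (\<lambda>f::nat \<Rightarrow> real. \<bar>f a - f b\<bar> powr p)"
  by (rule continuous_on_powr')
    (auto intro!: continuous_intros continuous_on_subset[OF continuous_on_product_coordinates])

lemma continuous_on_abs_powr: "0 < p \<Longrightarrow> continuous_on A (\<lambda>f::nat \<Rightarrow> real. \<bar>f a\<bar> powr p)"
  by (rule continuous_on_powr')
    (auto intro!: continuous_intros continuous_on_subset[OF continuous_on_product_coordinates])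

lemma continuous_on_tadpole_energy: "0 < p \<Longrightarrow> continuous_on A (tadpole_energy n i p)"
  unfolding tadpole_energy_def
  by (intro continuous_intros continuous_on_abs_diff_powr)

lemma continuous_on_lp_mass: "0 < p \<Longrightarrow> continuous_on A (lp_mass n p)"
  unfolding lp_mass_def by (intro continuous_intros continuous_on_abs_powr)

text \<open>Values outside \<open>{1..n}\<close> are irrelevant and fixed to 0, and \<open>|f x| \<le> 1\<close> follows from the
  mass constraint; the box condition only serves to make the set compact in the product topology.\<close>
definition normalized_functions :: "nat \<Rightarrow> real \<Rightarrow> (nat \<Rightarrow> real) set" where
  "normalized_functions n p =
     {f. (\<forall>x. f x \<in> (if x \<in> {1..n} then {-1..1} else {0})) \<and> f n = 0 \<and> lp_mass n p f = 1}"

lemma compact_normalized_functions: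
  assumes "0 < p"
  shows "compact (normalized_functions n p)"
proof -
  let ?box = "\<lambda>x::nat. if x \<in> {1..n} then {-1..1::real} else {0}"
  have "compactin (product_topology (\<lambda>i. euclidean) UNIV) (PiE UNIV ?box)"
    by (subst compactin_PiE) auto
  then have "compact (PiE UNIV ?box)"
    by (simp add: euclidean_product_topology)
  moreover have "closed {f::nat \<Rightarrow> real. f n = 0}"
    by (rule closed_Collect_eq) (auto intro: continuous_intros)
  moreover have "closed {f. lp_mass n p f = 1}"
    by (rule closed_Collect_eq) (auto intro: continuous_on_lp_mass assms)
  moreover have "normalized_functions n p = PiE UNIV ?box \<inter> ({f. f n = 0} \<inter> {f. lp_mass n p f = 1})"
    unfolding normalized_functions_def PiE_def Pi_def extensional_def by blast
  ultimately show ?thesis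
    by (simp add: compact_Int_closed closed_Int)
qed

lemma tadpole_energy_cong:
  "i \<in> {1..n} \<Longrightarrow> (\<And>x. x \<in> {1..n} \<Longrightarrow> f x = g x) \<Longrightarrow> tadpole_energy n i p f = tadpole_energy n i p g"
  unfolding tadpole_energy_def by (intro arg_cong2[where f = "(+)"] sum.cong) auto

lemma lp_mass_cong: "(\<And>x. x \<in> {1..n} \<Longrightarrow> f x = g x) \<Longrightarrow> lp_mass n p f = lp_mass n p g"
  unfolding lp_mass_def by (rule sum.cong) auto

lemma tadpole_energy_scale:
  assumes "0 \<le> c"
  shows "tadpole_energy n i p (\<lambda>x. c * f x) = c powr p * tadpole_energy n i p f"
proof -
  have scaled: "\<bar>c * a - c * b\<bar> powr p = c powr p * \<bar>a - b\<bar> powr p" for a b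
    using assms by (simp add: abs_mult powr_mult flip: right_diff_distrib)
  show ?thesis
    unfolding tadpole_energy_def scaled by (simp add: sum_distrib_left algebra_simps)
qed

lemma lp_mass_scale: "0 \<le> c \<Longrightarrow> lp_mass n p (\<lambda>x. c * f x) = c powr p * lp_mass n p f"
  unfolding lp_mass_def by (simp add: abs_mult powr_mult sum_distrib_left)

definition ground_state :: "nat \<Rightarrow> nat \<Rightarrow> real \<Rightarrow> (nat \<Rightarrow> real) \<Rightarrow> bool" where
  "ground_state n i p v \<longleftrightarrow> v n = 0 \<and> lp_mass n p v = 1 \<and>
     (\<forall>h. h n = 0 \<longrightarrow> tadpole_energy n i p v * lp_mass n p h \<le> tadpole_energy n i p h)"

lemma exists_normalized_rescaling:
  assumes "i \<in> {1..n}" "0 < p" "h n = 0" "0 < lp_mass n p h"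
  shows "\<exists>h'\<in>normalized_functions n p.
    tadpole_energy n i p h' = tadpole_energy n i p h / lp_mass n p h"
proof
  define c where "c = 1 / lp_mass n p h powr (1 / p)"
  have c: "0 \<le> c" "c powr p = 1 / lp_mass n p h"
    using assms by (auto simp: c_def powr_divide powr_powr)
  define h' where "h' x = (if x \<in> {1..n} then c * h x else 0)" for x
  have mass: "lp_mass n p h' = 1"
    using lp_mass_scale[OF c(1), of n p h] lp_mass_cong[of n h' "\<lambda>x. c * h x" p] assms c
    by (simp add: h'_def)
  show "tadpole_energy n i p h' = tadpole_energy n i p h / lp_mass n p h"
    using tadpole_energy_scale[OF c(1), of n i p h]
      tadpole_energy_cong[OF assms(1), of h' "\<lambda>x. c * h x" p] c
    by (simp add: h'_def)
  have "\<bar>h' x\<bar> \<le> 1" if "x \<in> {1..n}" for x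
  proof -
    have "\<bar>h' x\<bar> powr p \<le> lp_mass n p h'"
      unfolding lp_mass_def by (rule member_le_sum[OF that]) simp_all
    then show ?thesis
      using mass assms(2) powr_less_mono2[of p 1 "\<bar>h' x\<bar>"] by fastforce
  qed
  then show "h' \<in> normalized_functions n p"
    using mass assms(3) unfolding normalized_functions_def h'_def by (auto simp: abs_le_iff)
qed

lemma ground_state_if_minimizer:
  assumes "i \<in> {1..n}" "0 < p" and w: "w \<in> normalized_functions n p"
    and min: "\<And>f. f \<in> normalized_functions n p \<Longrightarrow> tadpole_energy n i p w \<le> tadpole_energy n i p f"
  shows "ground_state n i p w"
  unfolding ground_state_def
proof (intro conjI allI impI)
  show "w n = 0" "lp_mass n p w = 1"
    using w unfolding normalized_functions_def by auto
  fix h :: "nat \<Rightarrow> real"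
  assume "h n = 0"
  show "tadpole_energy n i p w * lp_mass n p h \<le> tadpole_energy n i p h"
  proof (cases "lp_mass n p h = 0")
    case True
    then show ?thesis by (simp add: tadpole_energy_nonneg)
  next
    case False
    then have "0 < lp_mass n p h"
      using lp_mass_nonneg[of n p h] by simp
    moreover have "tadpole_energy n i p w \<le> tadpole_energy n i p h / lp_mass n p h"
      using exists_normalized_rescaling[OF assms(1,2) \<open>h n = 0\<close> \<open>0 < lp_mass n p h\<close>] min by metis
    ultimately show ?thesis
      by (simp add: pos_le_divide_eq)
  qed
qed

lemma exists_ground_state:
  assumes "3 \<le> i" "i < n" "0 < p"
  shows "\<exists>v. ground_state n i p v"
proof -
  let ?\<delta> = "\<lambda>x::nat. if x = 1 then 1 else 0 :: real"
  have "lp_mass n p ?\<delta> = (\<Sum>x=1..n. if x = 1 then 1 else 0)"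
    unfolding lp_mass_def by (intro sum.cong) auto
  then have "lp_mass n p ?\<delta> = 1"
    using assms by simp
  then have "?\<delta> \<in> normalized_functions n p"
    using assms unfolding normalized_functions_def by auto
  then obtain w where "w \<in> normalized_functions n p"
    "\<And>f. f \<in> normalized_functions n p \<Longrightarrow> tadpole_energy n i p w \<le> tadpole_energy n i p f"
    using continuous_attains_inf[OF compact_normalized_functions[OF assms(3)] _
        continuous_on_tadpole_energy[OF assms(3)]]
    by blast
  then show ?thesis
    using assms by (intro exI[of _ w] ground_state_if_minimizer) auto
qed

lemma tadpole_energy_abs_le: "0 \<le> p \<Longrightarrow> tadpole_energy n i p (\<lambda>x. \<bar>f x\<bar>) \<le> tadpole_energy n i p f"
  unfolding tadpole_energy_def
  by (intro add_mono sum_mono powr_mono2) (auto simp: abs_triangle_ineq3)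

lemma ground_state_abs:
  assumes "ground_state n i p v" "0 \<le> p"
  shows "ground_state n i p (\<lambda>x. \<bar>v x\<bar>)"
  unfolding ground_state_def
proof (intro conjI allI impI)
  show "\<bar>v n\<bar> = 0" "lp_mass n p (\<lambda>x. \<bar>v x\<bar>) = 1"
    using assms(1) unfolding ground_state_def lp_mass_def by auto
  fix h :: "nat \<Rightarrow> real"
  assume "h n = 0"
  have "tadpole_energy n i p (\<lambda>x. \<bar>v x\<bar>) * lp_mass n p h \<le> tadpole_energy n i p v * lp_mass n p h"
    using tadpole_energy_abs_le[OF assms(2)] lp_mass_nonneg by (rule mult_right_mono)
  also have "\<dots> \<le> tadpole_energy n i p h"
    using assms(1) \<open>h n = 0\<close> unfolding ground_state_def by blast
  finally show "tadpole_energy n i p (\<lambda>x. \<bar>v x\<bar>) * lp_mass n p h \<le> tadpole_energy n i p h" .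
qed

lemma tadpole_energy_power_mean_le:
  assumes "1 \<le> p" "\<And>x. 0 \<le> f x" "\<And>x. 0 \<le> g x"
  shows "tadpole_energy n i p (\<lambda>x. power_mean p (f x) (g x))
    \<le> (tadpole_energy n i p f + tadpole_energy n i p g) / 2"
proof -
  have edge: "\<bar>power_mean p (f a) (g a) - power_mean p (f b) (g b)\<bar> powr p
      \<le> (\<bar>f a - f b\<bar> powr p + \<bar>g a - g b\<bar> powr p) / 2" for a b
    using assms by (intro power_mean_diff_powr_le) auto
  have "tadpole_energy n i p (\<lambda>x. power_mean p (f x) (g x))
      \<le> (\<Sum>k=1..<n. (\<bar>f k - f (Suc k)\<bar> powr p + \<bar>g k - g (Suc k)\<bar> powr p) / 2)
        + (\<bar>f 1 - f i\<bar> powr p + \<bar>g 1 - g i\<bar> powr p) / 2"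
    unfolding tadpole_energy_def by (intro add_mono sum_mono edge)
  also have "\<dots> = (tadpole_energy n i p f + tadpole_energy n i p g) / 2"
    unfolding tadpole_energy_def by (simp add: sum.distrib field_simps flip: sum_divide_distrib)
  finally show ?thesis .
qed

lemma lp_mass_power_mean:
  assumes "0 < p" "\<And>x. 0 \<le> f x" "\<And>x. 0 \<le> g x"
  shows "lp_mass n p (\<lambda>x. power_mean p (f x) (g x)) = (lp_mass n p f + lp_mass n p g) / 2"
  using assms unfolding lp_mass_def
  by (simp add: power_mean_nonneg power_mean_powr sum.distrib flip: sum_divide_distrib)

lemma tadpole_energy_4:
  assumes "4 \<le> n"
  shows "tadpole_energy n 4 p f = \<bar>f 1 - f 2\<bar> powr p + \<bar>f 2 - f 3\<bar> powr p + \<bar>f 3 - f 4\<bar> powr p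
    + \<bar>f 1 - f 4\<bar> powr p + (\<Sum>k=4..<n. \<bar>f k - f (Suc k)\<bar> powr p)"
proof -
  have "{1..<n} = {1, 2, 3} \<union> {4..<n}"
    using assms by auto
  then show ?thesis
    unfolding tadpole_energy_def by (simp add: sum.union_disjoint numeral_eq_Suc)
qed

lemma tadpole_energy_4_transpose:
  assumes "4 \<le> n"
  shows "tadpole_energy n 4 p (\<lambda>x. f (transpose 1 3 x)) = tadpole_energy n 4 p f"
proof -
  have "(\<Sum>k=4..<n. \<bar>f (transpose 1 3 k) - f (transpose 1 3 (Suc k))\<bar> powr p)
      = (\<Sum>k=4..<n. \<bar>f k - f (Suc k)\<bar> powr p)"
    by (intro sum.cong) auto
  then show ?thesis
    unfolding tadpole_energy_4[OF assms] by (simp add: abs_minus_commute)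
qed

lemma lp_mass_transpose:
  assumes "3 \<le> n"
  shows "lp_mass n p (\<lambda>x. f (transpose 1 3 x)) = lp_mass n p f"
proof -
  have "transpose 1 3 ` {1..n} = {1..n}"
    using assms by (intro transpose_image_eq) auto
  then show ?thesis
    unfolding lp_mass_def using sum.reindex[OF inj_on_transpose, of "\<lambda>x. \<bar>f x\<bar> powr p" 1 3 "{1..n}"]
    by simp
qed

lemma ground_state_symmetrize:
  assumes "ground_state n 4 p u" "\<And>x. 0 \<le> u x" "1 \<le> p" "4 \<le> n"
  shows "ground_state n 4 p (\<lambda>x. power_mean p (u x) (u (transpose 1 3 x)))"
proof -
  let ?v = "\<lambda>x. power_mean p (u x) (u (transpose 1 3 x))"
  have p: "0 < p" using assms(3) by simp
  have "tadpole_energy n 4 p ?v \<le> tadpole_energy n 4 p u"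
    using tadpole_energy_power_mean_le[OF assms(3), of u "\<lambda>x. u (transpose 1 3 x)" n 4]
      tadpole_energy_4_transpose[OF assms(4), of p u] assms(2) by simp
  moreover have "lp_mass n p ?v = 1"
    using lp_mass_power_mean[OF p, of u "\<lambda>x. u (transpose 1 3 x)" n] lp_mass_transpose[of n p u] assms
    by (simp add: ground_state_def)
  moreover have "?v n = 0"
    using assms p by (simp add: ground_state_def power_mean_same)
  ultimately show ?thesis
    using assms(1) lp_mass_nonneg[of n p] unfolding ground_state_def
    by (meson mult_right_mono order_trans)
qed

section \<open>Flat ground states\<close>

lemma powr_increment_ge:
  fixes x e p :: real
  assumes "0 < x" "0 \<le> e" "1 \<le> p"
  shows "e * x powr (p - 1) \<le> (x + e) powr p - x powr p"
proof -
  have split: "y powr p = y * y powr (p - 1)" if "0 \<le> y" for y :: real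
    using powr_mult_base[OF that, of "p - 1"] by simp
  have "x powr (p - 1) \<le> (x + e) powr (p - 1)"
    using assms by (intro powr_mono2) auto
  then have "(x + e) * x powr (p - 1) \<le> (x + e) * (x + e) powr (p - 1)"
    using assms by (intro mult_left_mono) auto
  then show ?thesis
    using assms split[of x] split[of "x + e"] by (simp add: algebra_simps)
qed

lemma exists_powr_lt_linear:
  fixes p K \<delta> :: real
  assumes "1 < p" "0 < K" "0 < \<delta>"
  shows "\<exists>e. 0 < e \<and> e \<le> \<delta> \<and> 2 * e powr p < K * e"
proof -
  define e where "e = min \<delta> ((K / 4) powr (1 / (p - 1)))"
  have e: "0 < e" "e \<le> \<delta>"
    using assms by (auto simp: e_def)
  have "e powr (p - 1) \<le> ((K / 4) powr (1 / (p - 1))) powr (p - 1)"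
    using assms e by (intro powr_mono2) (auto simp: e_def)
  also have "\<dots> = K / 4"
    using assms by (simp add: powr_powr)
  finally have "e powr (p - 1) \<le> K / 4" .
  have "2 * e powr p = 2 * e * e powr (p - 1)"
    using e powr_mult_base[of e "p - 1"] by simp
  also have "\<dots> \<le> 2 * e * (K / 4)"
    using \<open>e powr (p - 1) \<le> K / 4\<close> e by (intro mult_left_mono) auto
  also have "\<dots> < K * e"
    using assms e by simp
  finally show ?thesis
    using e by blast
qed

lemma two_half_powr_less:
  fixes p d :: real
  assumes "1 < p" "0 < d"
  shows "2 * (d / 2) powr p < d powr p"
proof -
  have "2 * (d / 2) powr p < 2 powr p * (d / 2) powr p"
    using assms powr_less_cancel_iff[of 2 1 p] by (intro mult_strict_right_mono) auto
  also have "\<dots> = d powr p"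
    by (simp flip: powr_mult)
  finally show ?thesis .
qed

lemma path_sum_eq_0_imp_eq:
  fixes f :: "nat \<Rightarrow> real"
  assumes "(\<Sum>k=m..<n. \<bar>f k - f (Suc k)\<bar> powr p) = 0" "m \<le> n"
  shows "f m = f n"
  using assms(2,1)
proof (induction n rule: dec_induct)
  case (step n)
  then show ?case
    by (simp add: add_nonneg_eq_0_iff sum_nonneg)
qed simp

lemma lp_mass_upd:
  assumes "j \<in> {1..n}"
  shows "lp_mass n p (f(j := t)) = lp_mass n p f - \<bar>f j\<bar> powr p + \<bar>t\<bar> powr p"
proof -
  have "(\<Sum>x\<in>{1..n} - {j}. \<bar>(f(j := t)) x\<bar> powr p) = (\<Sum>x\<in>{1..n} - {j}. \<bar>f x\<bar> powr p)"
    by (intro sum.cong) auto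
  moreover have "lp_mass n p g = \<bar>g j\<bar> powr p + (\<Sum>x\<in>{1..n} - {j}. \<bar>g x\<bar> powr p)" for g
    unfolding lp_mass_def by (rule sum.remove[OF finite_atLeastAtMost assms])
  ultimately show ?thesis
    by simp
qed

lemma path_sum_upd:
  fixes f :: "nat \<Rightarrow> real"
  assumes "1 < k" "k < n"
  shows "(\<Sum>i=1..<n. \<bar>(f(k := t)) i - (f(k := t)) (Suc i)\<bar> powr p)
    = (\<Sum>i=1..<n. \<bar>f i - f (Suc i)\<bar> powr p) - \<bar>f (k - 1) - f k\<bar> powr p - \<bar>f k - f (Suc k)\<bar> powr p
      + \<bar>f (k - 1) - t\<bar> powr p + \<bar>t - f (Suc k)\<bar> powr p"
proof -
  let ?F = "\<lambda>g i. \<bar>g i - g (Suc i)\<bar> powr p"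
  have "(\<Sum>i=1..<n. ?F (f(k := t)) i) - (\<Sum>i=1..<n. ?F f i) = (\<Sum>i=1..<n. ?F (f(k := t)) i - ?F f i)"
    by (simp add: sum_subtractf)
  also have "\<dots> = (\<Sum>i\<in>{k - 1, k}. ?F (f(k := t)) i - ?F f i)"
    using assms by (intro sum.mono_neutral_right) auto
  finally have "(\<Sum>i=1..<n. ?F (f(k := t)) i) - (\<Sum>i=1..<n. ?F f i)
      = (\<Sum>i\<in>{k - 1, k}. ?F (f(k := t)) i - ?F f i)" .
  moreover have "k - 1 \<noteq> k" "Suc (k - 1) = k"
    using assms by auto
  ultimately show ?thesis
    by (simp add: algebra_simps)
qed

lemma exists_two_powr_plus_remainder_less:
  fixes p c :: real
  assumes "1 < p" "0 < c"
  shows "\<exists>e. 0 < e \<and> e \<le> c \<and> 2 * e powr p + (c - e) powr p < c powr p"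
proof -
  obtain e where e: "0 < e" "e \<le> c / 2" "2 * e powr p < (c / 2) powr (p - 1) * e"
    using exists_powr_lt_linear[of p "(c / 2) powr (p - 1)" "c / 2"] assms by auto
  have "(c / 2) powr (p - 1) * e \<le> e * (c - e) powr (p - 1)"
    using assms e by (simp add: mult.commute mult_left_mono powr_mono2)
  also have "\<dots> \<le> c powr p - (c - e) powr p"
    using powr_increment_ge[of "c - e" e p] assms e by simp
  finally show ?thesis
    using e assms by (intro exI[of _ e]) auto
qed

lemma exists_two_powr_less_increment:
  fixes p a \<mu> :: real
  assumes "1 < p" "0 < a" "0 < \<mu>"
  shows "\<exists>e. 0 < e \<and> 2 * e powr p < \<mu> * ((a + e) powr p - a powr p)"
proof -
  obtain e where e: "0 < e" "2 * e powr p < \<mu> * a powr (p - 1) * e"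
    using exists_powr_lt_linear[of p "\<mu> * a powr (p - 1)" 1] assms by auto
  moreover have "\<mu> * a powr (p - 1) * e \<le> \<mu> * ((a + e) powr p - a powr p)"
    using powr_increment_ge[of a e p] assms e by (simp add: mult.commute mult.left_commute)
  ultimately show ?thesis
    by (intro exI[of _ e]) auto
qed

locale flat_ground_state =
  fixes n :: nat and p :: real and v :: "nat \<Rightarrow> real"
  assumes n: "5 \<le> n" and p: "1 < p"
    and ground: "ground_state n 4 p v" and nonneg: "\<And>x. 0 \<le> v x"
    and v1: "v 1 = v 4" and v3: "v 3 = v 4"
begin

definition path_tail :: real where
  "path_tail = (\<Sum>k=4..<n. \<bar>v k - v (Suc k)\<bar> powr p)"

lemma mass: "lp_mass n p v = 1" and v_n: "v n = 0"
  using ground unfolding ground_state_def by auto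

lemma energy_le_if_mass_ge:
  assumes "h n = 0" "1 \<le> lp_mass n p h"
  shows "tadpole_energy n 4 p v \<le> tadpole_energy n 4 p h"
proof -
  have "tadpole_energy n 4 p v \<le> tadpole_energy n 4 p v * lp_mass n p h"
    using mult_left_mono[OF assms(2) tadpole_energy_nonneg] by simp
  also have "\<dots> \<le> tadpole_energy n 4 p h"
    using ground assms(1) unfolding ground_state_def by blast
  finally show ?thesis .
qed

lemma energy_upd_cycle:
  assumes "j < 4"
  shows "tadpole_energy n 4 p (v(j := t))
    = \<bar>(v(j := t)) 1 - (v(j := t)) 2\<bar> powr p + \<bar>(v(j := t)) 2 - (v(j := t)) 3\<bar> powr p
      + \<bar>(v(j := t)) 3 - v 4\<bar> powr p + \<bar>(v(j := t)) 1 - v 4\<bar> powr p + path_tail"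
proof -
  have "(\<Sum>k=4..<n. \<bar>(v(j := t)) k - (v(j := t)) (Suc k)\<bar> powr p) = path_tail"
    unfolding path_tail_def using assms by (intro sum.cong) auto
  then show ?thesis
    using tadpole_energy_4[of n p "v(j := t)"] n assms by simp
qed

lemma energy: "tadpole_energy n 4 p v = 2 * \<bar>v 2 - v 4\<bar> powr p + path_tail"
  using energy_upd_cycle[of 0 "v 0"] v1 v3 p by (simp add: abs_minus_commute)

lemma v2_not_below: "v 4 \<le> v 2"
proof (rule ccontr)
  assume below: "\<not> v 4 \<le> v 2"
  let ?h = "v(2 := v 4)"
  have "tadpole_energy n 4 p ?h = path_tail"
    using energy_upd_cycle[of 2 "v 4"] v1 v3 p by simp
  also have "\<dots> < tadpole_energy n 4 p v"
    using energy below by simp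
  finally have "tadpole_energy n 4 p ?h < tadpole_energy n 4 p v" .
  moreover have "\<bar>v 2\<bar> powr p \<le> \<bar>v 4\<bar> powr p"
    using below nonneg[of 2] p by (intro powr_mono2) auto
  then have "1 \<le> lp_mass n p ?h"
    using lp_mass_upd[of 2 n p v "v 4"] mass n by simp
  moreover have "?h n = 0"
    using v_n n by simp
  ultimately show False
    using energy_le_if_mass_ge[of ?h] by linarith
qed

lemma v2_not_above: "v 2 \<le> v 4"
proof (rule ccontr)
  assume above: "\<not> v 2 \<le> v 4"
  define d where "d = v 2 - v 4"
  have d: "0 < d" "v 2 = v 4 + d"
    using above by (simp_all add: d_def)
  let ?h = "v(1 := v 4 + d / 2)"
  have "tadpole_energy n 4 p ?h = 2 * (d / 2) powr p + d powr p + path_tail"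
    using energy_upd_cycle[of 1 "v 4 + d / 2"] v3 d by (simp add: abs_minus_commute)
  also have "\<dots> < tadpole_energy n 4 p v"
    using energy two_half_powr_less[OF p d(1)] d by simp
  finally have "tadpole_energy n 4 p ?h < tadpole_energy n 4 p v" .
  moreover have "\<bar>v 1\<bar> powr p \<le> \<bar>v 4 + d / 2\<bar> powr p"
    using v1 nonneg[of 4] d p by (intro powr_mono2) auto
  then have "1 \<le> lp_mass n p ?h"
    using lp_mass_upd[of 1 n p v] mass n by simp
  moreover have "?h n = 0"
    using v_n n by simp
  ultimately show False
    using energy_le_if_mass_ge[of ?h] by linarith
qed

lemma v4_eq_0: "v 4 = 0"
proof (rule ccontr)
  define a where "a = v 4"
  assume "v 4 \<noteq> 0"
  then have a: "0 < a" using nonneg[of 4] by (simp add: a_def)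
  have v2: "v 2 = a"
    using v2_not_below v2_not_above by (simp add: a_def)
  have energy_v: "tadpole_energy n 4 p v = path_tail"
    using energy v2 p by (simp add: a_def)
  have "path_tail \<noteq> 0"
    using path_sum_eq_0_imp_eq[where f = v and m = 4] n v_n a unfolding path_tail_def a_def by auto
  then have tail: "0 < path_tail"
    unfolding path_tail_def by (simp add: less_le sum_nonneg)
  obtain e where e: "0 < e" "2 * e powr p < path_tail * ((a + e) powr p - a powr p)"
    using exists_two_powr_less_increment[OF p a tail] by blast
  let ?h = "v(2 := a + e)"
  have "tadpole_energy n 4 p ?h = 2 * e powr p + path_tail"
    using energy_upd_cycle[of 2 "a + e"] v1 v3 p e by (simp add: a_def abs_minus_commute)
  moreover have "lp_mass n p ?h = 1 + ((a + e) powr p - a powr p)"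
    using lp_mass_upd[of 2 n p v "a + e"] mass n v2 a e by simp
  moreover have "tadpole_energy n 4 p v * lp_mass n p ?h \<le> tadpole_energy n 4 p ?h"
    using ground v_n n unfolding ground_state_def by simp
  ultimately have "path_tail * (1 + ((a + e) powr p - a powr p)) \<le> 2 * e powr p + path_tail"
    using energy_v by metis
  then show False
    using e(2) by (simp add: algebra_simps)
qed

lemma vanishes_on_cycle: "i \<in> {1..4} \<Longrightarrow> v i = 0"
  using v1 v3 v4_eq_0 v2_not_below v2_not_above by (auto simp: numeral_eq_Suc le_Suc_eq)

lemma first_nonzero_on_path:
  obtains j where "4 < j" "j < n" "0 < v j" "\<And>i. 3 \<le> i \<Longrightarrow> i < j \<Longrightarrow> v i = 0"
proof -
  have "\<exists>x\<in>{1..n}. v x \<noteq> 0"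
  proof (rule ccontr)
    assume "\<not> ?thesis"
    then have "lp_mass n p v = 0"
      unfolding lp_mass_def by simp
    then show False
      using mass by simp
  qed
  then obtain x where x: "x \<in> {1..n}" "v x \<noteq> 0" "4 < x"
    using vanishes_on_cycle by (meson atLeastAtMost_iff not_le)
  define j where "j = (LEAST j. 4 < j \<and> v j \<noteq> 0)"
  have j: "4 < j" "v j \<noteq> 0" "j \<le> x"
    using x LeastI[of "\<lambda>j. 4 < j \<and> v j \<noteq> 0" x] Least_le[of "\<lambda>j. 4 < j \<and> v j \<noteq> 0" x]
    unfolding j_def by auto
  have "j < n" "0 < v j"
    using j x v_n nonneg[of j] by (auto simp: le_less)
  then show ?thesis
  proof (rule that[OF j(1)])
    show "v i = 0" if "3 \<le> i" "i < j" for i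
      using that vanishes_on_cycle not_less_Least[of i "\<lambda>j. 4 < j \<and> v j \<noteq> 0"]
      unfolding j_def[symmetric] by (cases "4 < i") auto
  qed
qed

lemma inconsistent: False
proof -
  obtain j where j: "4 < j" "j < n" "0 < v j" and before_j: "\<And>i. 3 \<le> i \<Longrightarrow> i < j \<Longrightarrow> v i = 0"
    using first_nonzero_on_path by metis
  define k where "k = j - 1"
  have k: "4 \<le> k" "k < n" "Suc k = j"
    using j unfolding k_def by auto
  define c where "c = v j"
  have c: "0 < c"
    using j by (simp add: c_def)
  obtain e where e: "0 < e" "e \<le> c" "2 * e powr p + (c - e) powr p < c powr p"
    using exists_two_powr_plus_remainder_less[OF p c] by blast
  let ?h = "v(k := e)"
  let ?path = "\<lambda>f. \<Sum>i=1..<n. \<bar>f i - f (Suc i)\<bar> powr p"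
  have "?path ?h = ?path v - c powr p + e powr p + (c - e) powr p"
    using path_sum_upd[of k n v e p] k before_j[of k] before_j[of "k - 1"] p e
    by (simp add: c_def abs_minus_commute)
  moreover have "\<bar>?h 1 - ?h 4\<bar> powr p \<le> e powr p"
    using k vanishes_on_cycle e p by auto
  moreover have "\<bar>v 1 - v 4\<bar> powr p = 0"
    using vanishes_on_cycle p by simp
  ultimately have "tadpole_energy n 4 p ?h < tadpole_energy n 4 p v"
    using e unfolding tadpole_energy_def by linarith
  moreover have "1 \<le> lp_mass n p ?h"
    using lp_mass_upd[of k n p v e] k before_j[of k] mass by simp
  moreover have "?h n = 0"
    using v_n k by simp
  ultimately show False
    using energy_le_if_mass_ge[of ?h] by linarith
qed

end

lemma ground_state_4_not_flat:
  assumes "5 \<le> n" "1 < p" "ground_state n 4 p v" "\<And>x. 0 \<le> v x" "v 1 = v 3"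
  shows "v 1 \<noteq> v 4"
proof
  assume "v 1 = v 4"
  then interpret flat_ground_state n p v
    using assms by unfold_locales auto
  show False
    by (rule inconsistent)
qed

theorem lemma2p3:
  fixes n :: nat and p :: real
  assumes "n \<ge> 5" and "p > 1"
  shows "lambda1p (tadpole_V n) (tadpole_E n 4) p > lambda1p (tadpole_V n) (tadpole_E n 3) p"
proof -
  obtain w where "ground_state n 4 p w"
    using exists_ground_state[of 4 n p] assms by auto
  then have "ground_state n 4 p (\<lambda>x. \<bar>w x\<bar>)"
    using assms by (intro ground_state_abs) auto
  define v where "v = (\<lambda>x. power_mean p \<bar>w x\<bar> \<bar>w (transpose 1 3 x)\<bar>)"
  have v: "ground_state n 4 p v" "\<And>x. 0 \<le> v x" "v 1 = v 3"
    using ground_state_symmetrize[OF \<open>ground_state n 4 p (\<lambda>x. \<bar>w x\<bar>)\<close>] assms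
    by (auto simp: v_def power_mean_nonneg power_mean_commute)
  then have "v 1 \<noteq> v 4"
    using assms ground_state_4_not_flat by blast
  then obtain x where "x \<in> {1, 4}" "v x \<noteq> 0"
    by (metis insertI1 insertI2)
  then have "lambda1p (tadpole_V n) (tadpole_E n 3) p \<le> tadpole_energy n 3 p v / lp_mass n p v"
    using assms v(1) by (intro lambda1p_tadpole_le) (auto simp: ground_state_def)
  also have "\<dots> = tadpole_energy n 4 p v - \<bar>v 1 - v 4\<bar> powr p"
    using v unfolding ground_state_def tadpole_energy_def by simp
  also have "\<dots> < tadpole_energy n 4 p v"
    using \<open>v 1 \<noteq> v 4\<close> by simp
  also have "\<dots> \<le> lambda1p (tadpole_V n) (tadpole_E n 4) p"
    using assms v(1) unfolding ground_state_def by (intro lambda1p_tadpole_ge) auto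
  finally show ?thesis .
qed

end
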